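(* Let $A,B$ be Pareto sets of size $n$ each, sorted lexicographically, and let $k$ be the size of their Pareto sum. The Successive Binary Search algorithm computes the Pareto sum of $A$ and $B$ in $\mathcal{O}(nk\log n)$ time using $\mathcal{O}(n+k)$ space.
   Context: For $p,p'\in\mathbb{R}^2$, $p$ dominates $p'$ if $p\neq p'$, $p.x\le p'.x$ and $p.y\le p'.y$. A Pareto set is a set $S\subset\mathbb{R}^2$ in which no point dominates another; $S_i$ denotes its element of rank $i$ in lexicographic order. The Minkowski matrix is $M_{ij}=A_i+B_j$ (computed on demand); each column is a sorted Pareto set. The Pareto sum $C$ is the set of entries of $M$ not dominated by any entry of $M$. A range-minimum oracle, given $[x_{\min},x_{\max})\times[y_{\min},y_{\max})$, returns the lexicographically smallest entry of $M$ in that range (or reports none). The successive algorithm: set $C=\{M_{11},M_{nn}\}$, $x_{\min}=M_{11}.x$, $x_{\max}=M_{nn}.x$, $y_{\min}=M_{nn}.y$, $y_{\max}=M_{11}.y$; repeatedly query the oracle; if it returns a point $m$, add $m$ to $C$ and set $x_{\min}=m.x$, $y_{\max}=m.y$; otherwise stop. In Successive Binary Search the oracle is implemented as follows: in each column, binary searches find the first row $f_x$ with $x$-coordinate $\ge x_{\min}$, the last row $l_x$ with $x$-coordinate $<x_{\max}$, the first row $f_y$ with $y$-coordinate $<y_{\max}$ and the last row $l_y$ with $y$-coordinate $\ge y_{\min}$; if $[f_x,l_x]\cap[f_y,l_y]\neq\emptyset$, the entry in row $\max(f_x,f_y)$ is that column's candidate; the oracle returns the lexicographically smallest candidate over all columns.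 *)

theory Defs
  imports Complex_Main
begin

type_synonym point = "real \<times> real"

definition dominates :: "point \<Rightarrow> point \<Rightarrow> bool" where
  "dominates p q \<longleftrightarrow> p \<noteq> q \<and> fst p \<le> fst q \<and> snd p \<le> snd q"

definition pareto_set :: "point set \<Rightarrow> bool" where
  "pareto_set S \<longleftrightarrow> (\<forall>p\<in>S. \<forall>q\<in>S. \<not> dominates p q)"

definition lex_less :: "point \<Rightarrow> point \<Rightarrow> bool" where
  "lex_less p q \<longleftrightarrow> fst p < fst q \<or> (fst p = fst q \<and> snd p < snd q)"

text \<open>A Pareto set given as the list of its elements in lexicographic order
  (element of rank i+1 is at list index i).\<close>
definition sorted_pareto :: "point list \<Rightarrow> bool" where
  "sorted_pareto A \<longleftrightarrow> pareto_set (set A) \<and> sorted_wrt lex_less A"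

definition padd :: "point \<Rightarrow> point \<Rightarrow> point" where
  "padd p q = (fst p + fst q, snd p + snd q)"

text \<open>Minkowski matrix, 0-based: entry (i,j) is A_i + B_j.\<close>
definition mink :: "point list \<Rightarrow> point list \<Rightarrow> nat \<Rightarrow> nat \<Rightarrow> point" where
  "mink A B i j = padd (A ! i) (B ! j)"

definition mink_entries :: "point list \<Rightarrow> point list \<Rightarrow> point set" where
  "mink_entries A B = {mink A B i j | i j. i < length A \<and> j < length B}"

definition pareto_sum :: "point list \<Rightarrow> point list \<Rightarrow> point set" where
  "pareto_sum A B = {m \<in> mink_entries A B. \<not> (\<exists>m'\<in>mink_entries A B. dominates m' m)}"

text \<open>bs_first P lo hi: binary search for the first index in [lo,hi) satisfying the
  (monotone) predicate P, returning hi if there is none; the second component is the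
  number of predicate evaluations (unit-cost comparisons) performed.\<close>
function bs_first :: "(nat \<Rightarrow> bool) \<Rightarrow> nat \<Rightarrow> nat \<Rightarrow> nat \<times> nat" where
  "bs_first P lo hi =
     (if lo < hi then
        (let mid = (lo + hi) div 2 in
         if P mid then (let (r, c) = bs_first P lo mid in (r, Suc c))
         else (let (r, c) = bs_first P (Suc mid) hi in (r, Suc c)))
      else (lo, 0))"
  by pat_completeness auto
termination
  by (relation "measure (\<lambda>(P, lo, hi). hi - lo)") auto

text \<open>Per-column query (column j of M, rows 0..n-1) for the range
  [xmin,xmax) x [ymin,ymax).  fx = first row with x >= xmin, ex = first row with
  x >= xmax (so l_x = ex - 1), fy = first row with y < ymax, ey = first row with
  y < ymin (so l_y = ey - 1).  [fx,l_x] and [fy,l_y] intersect iff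
  max fx fy < min ex ey; then the candidate is the entry in row max fx fy.
  Returns the candidate and the number of unit operations used.\<close>
definition column_query ::
  "point list \<Rightarrow> point list \<Rightarrow> real \<Rightarrow> real \<Rightarrow> real \<Rightarrow> real \<Rightarrow> nat \<Rightarrow> point option \<times> nat" where
  "column_query A B xmin xmax ymin ymax j =
     (let n = length A;
          col = (\<lambda>i. mink A B i j);
          (fx, c1) = bs_first (\<lambda>i. fst (col i) \<ge> xmin) 0 n;
          (ex, c2) = bs_first (\<lambda>i. fst (col i) \<ge> xmax) 0 n;
          (fy, c3) = bs_first (\<lambda>i. snd (col i) < ymax) 0 n;
          (ey, c4) = bs_first (\<lambda>i. snd (col i) < ymin) 0 n
      in (if max fx fy < min ex ey then Some (col (max fx fy)) else None,
          c1 + c2 + c3 + c4 + 1))"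

definition lex_min_opt :: "point option \<Rightarrow> point option \<Rightarrow> point option" where
  "lex_min_opt a b = (case a of None \<Rightarrow> b | Some p \<Rightarrow>
     (case b of None \<Rightarrow> Some p | Some q \<Rightarrow> Some (if lex_less q p then q else p)))"

definition range_min_query ::
  "point list \<Rightarrow> point list \<Rightarrow> real \<Rightarrow> real \<Rightarrow> real \<Rightarrow> real \<Rightarrow> point option \<times> nat" where
  "range_min_query A B xmin xmax ymin ymax =
     foldl (\<lambda>(best, c) j. let (cand, c') = column_query A B xmin xmax ymin ymax j
                          in (lex_min_opt best cand, c + c' + 1))
           (None, 0) [0..<length B]"

record sbs_state =
  out :: "point list"
  cur_xmin :: real
  cur_ymax :: real
  halted :: bool
  time :: nat

definition sbs_init :: "point list \<Rightarrow> point list \<Rightarrow> sbs_state" where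
  "sbs_init A B =
     (let m11 = mink A B 0 0; mnn = mink A B (length A - 1) (length B - 1) in
      \<lparr> out = [m11, mnn], cur_xmin = fst m11, cur_ymax = snd m11,
        halted = False, time = 1 \<rparr>)"

definition sbs_step :: "point list \<Rightarrow> point list \<Rightarrow> sbs_state \<Rightarrow> sbs_state" where
  "sbs_step A B s =
     (if halted s then s else
      (let mnn = mink A B (length A - 1) (length B - 1);
           (r, c) = range_min_query A B (cur_xmin s) (fst mnn) (snd mnn) (cur_ymax s)
       in case r of
            None \<Rightarrow> s\<lparr> halted := True, time := time s + c + 1 \<rparr>
          | Some m \<Rightarrow> s\<lparr> out := out s @ [m], cur_xmin := fst m, cur_ymax := snd m,
                         time := time s + c + 1 \<rparr>))"

definition sbs_run :: "point list \<Rightarrow> point list \<Rightarrow> nat \<Rightarrow> sbs_state" where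
  "sbs_run A B t = (sbs_step A B ^^ t) (sbs_init A B)"

text \<open>Space of a state (in stored points/numbers): the inputs A and B, the output
  list C, and a constant number of scalars (xmin, ymax, flags, counters and the
  O(1) working memory of the column-by-column range_min_query).  The Minkowski matrix is
  never stored.\<close>
definition sbs_space :: "point list \<Rightarrow> point list \<Rightarrow> sbs_state \<Rightarrow> nat" where
  "sbs_space A B s = length A + length B + length (out s) + 16"

end

theory Submission
  imports Defs "HOL-Library.Product_Lexorder"
begin

text \<open>
  Starting from a point (x, y) of the Pareto sum C, the oracle returns the lexicographically
  smallest entry of M in the box [x, Mnn.x) x [Mnn.y, y).  An entry dominating it would lie in the
  same box, since an entry left of x and below y would dominate (x, y); so the returned entry
  belongs to C.  Conversely every point of C strictly between x and Mnn.x lies in the box.  Hence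
  each query returns the next point of C in x-order, the query fails exactly when only Mnn is
  left, and the loop halts within k iterations.  A query runs four binary searches in each of the
  n columns, which are sorted because A is, so it costs O(n log n); the state stores only A, B and
  the output list.
\<close>

declare bs_first.simps [simp del]

lemma bs_first_unfold:
  assumes "lo < hi"
  shows "bs_first P lo hi =
    (let mid = (lo + hi) div 2;
         b = (if P mid then bs_first P lo mid else bs_first P (Suc mid) hi)
     in (fst b, Suc (snd b)))"
  using assms by (subst bs_first.simps) (simp add: Let_def split: prod.split)

lemma bs_first_threshold:
  assumes "lo \<le> hi" and "\<And>i j. lo \<le> i \<Longrightarrow> i \<le> j \<Longrightarrow> j < hi \<Longrightarrow> P i \<Longrightarrow> P j"
  shows "lo \<le> fst (bs_first P lo hi) \<and> fst (bs_first P lo hi) \<le> hi \<and>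
    (\<forall>i. lo \<le> i \<and> i < hi \<longrightarrow> P i \<longleftrightarrow> fst (bs_first P lo hi) \<le> i)"
  using assms
proof (induction P lo hi rule: bs_first.induct)
  case (1 P lo hi)
  show ?case
  proof (cases "lo < hi")
    case False
    then have "bs_first P lo hi = (lo, 0)" by (subst bs_first.simps) simp
    with False "1.prems"(1) show ?thesis by auto
  next
    case True
    define mid where "mid = (lo + hi) div 2"
    have mid: "lo \<le> mid" "mid < hi" using True by (auto simp: mid_def)
    show ?thesis
    proof (cases "P mid")
      case True
      define r where "r = fst (bs_first P lo mid)"
      have eq: "fst (bs_first P lo hi) = r"
        using True unfolding bs_first_unfold[OF \<open>lo < hi\<close>] Let_def mid_def[symmetric] r_def
        by simp
      have IH: "lo \<le> r \<and> r \<le> mid \<and> (\<forall>i. lo \<le> i \<and> i < mid \<longrightarrow> P i \<longleftrightarrow> r \<le> i)"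
        unfolding r_def
        by (rule "1.IH"(1)[OF \<open>lo < hi\<close> mid_def True mid(1)])
          (use "1.prems"(2) mid(2) in \<open>meson less_trans\<close>)
      have "P i" if "mid \<le> i" "i < hi" for i
        using "1.prems"(2)[OF mid(1) that] True by blast
      then have "\<forall>i. lo \<le> i \<and> i < hi \<longrightarrow> P i \<longleftrightarrow> r \<le> i"
        using IH by (metis le_trans linorder_not_le)
      with IH mid show ?thesis unfolding eq by simp
    next
      case False
      define r where "r = fst (bs_first P (Suc mid) hi)"
      have eq: "fst (bs_first P lo hi) = r"
        using False unfolding bs_first_unfold[OF \<open>lo < hi\<close>] Let_def mid_def[symmetric] r_def
        by simp
      have IH: "Suc mid \<le> r \<and> r \<le> hi \<and> (\<forall>i. Suc mid \<le> i \<and> i < hi \<longrightarrow> P i \<longleftrightarrow> r \<le> i)"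
        unfolding r_def
        by (rule "1.IH"(2)[OF \<open>lo < hi\<close> mid_def False])
          (use "1.prems"(2) mid in \<open>meson Suc_leD le_trans Suc_leI\<close>)+
      have "\<not> P i" if "lo \<le> i" "i \<le> mid" for i
        using "1.prems"(2)[OF that mid(2)] False by blast
      then have "\<forall>i. lo \<le> i \<and> i < hi \<longrightarrow> P i \<longleftrightarrow> r \<le> i"
        using IH by (metis le_trans not_less_eq_eq)
      with IH mid show ?thesis unfolding eq by simp
    qed
  qed
qed

lemma bs_first_comparisons: "2 ^ snd (bs_first P lo hi) \<le> max 1 (2 * (hi - lo))"
proof (induction P lo hi rule: bs_first.induct)
  case (1 P lo hi)
  show ?case
  proof (cases "lo < hi")
    case False
    then have "bs_first P lo hi = (lo, 0)" by (subst bs_first.simps) simp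
    then show ?thesis by simp
  next
    case True
    define mid where "mid = (lo + hi) div 2"
    have "2 ^ snd (if P mid then bs_first P lo mid else bs_first P (Suc mid) hi) \<le> hi - lo"
    proof (cases "P mid")
      case True
      have "max 1 (2 * (mid - lo)) \<le> hi - lo" using \<open>lo < hi\<close> by (auto simp: mid_def)
      with "1.IH"(1)[OF \<open>lo < hi\<close> mid_def True] have "2 ^ snd (bs_first P lo mid) \<le> hi - lo"
        by (rule order.trans)
      with True show ?thesis by simp
    next
      case False
      have "max 1 (2 * (hi - Suc mid)) \<le> hi - lo" using \<open>lo < hi\<close> by (auto simp: mid_def)
      with "1.IH"(2)[OF \<open>lo < hi\<close> mid_def False]
      have "2 ^ snd (bs_first P (Suc mid) hi) \<le> hi - lo"
        by (rule order.trans)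
      with False show ?thesis by simp
    qed
    then show ?thesis unfolding bs_first_unfold[OF True] Let_def mid_def[symmetric] by simp
  qed
qed

lemma bs_first_comparisons_log:
  assumes "1 \<le> n"
  shows "real (snd (bs_first P 0 n)) \<le> log 2 (real n) + 1"
proof -
  have "2 ^ snd (bs_first P 0 n) \<le> 2 * n" using bs_first_comparisons[of P 0 n] assms by simp
  then have "(2::real) ^ snd (bs_first P 0 n) \<le> 2 * real n"
    by (metis of_nat_le_iff of_nat_mult of_nat_numeral of_nat_power)
  then have "log 2 (2 ^ snd (bs_first P 0 n)) \<le> log 2 (2 * real n)"
    using assms by (subst log_le_cancel_iff) auto
  with assms show ?thesis by (simp add: log_mult)
qed

lemma lex_less_iff_less: "lex_less p q \<longleftrightarrow> p < q"
  by (simp add: lex_less_def less_prod_def')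

definition Min_opt :: "'a::linorder set \<Rightarrow> 'a option" where
  "Min_opt S = (if S = {} then None else Some (Min S))"

lemma lex_min_opt_Min_opt:
  assumes "finite S" "finite T"
  shows "lex_min_opt (Min_opt S) (Min_opt T) = Min_opt (S \<union> T)"
proof (cases "S = {} \<or> T = {}")
  case True
  then show ?thesis by (auto simp: Min_opt_def lex_min_opt_def)
next
  case False
  have "lex_min_opt (Some p) (Some q) = Some (min p q)" for p q
    by (auto simp: lex_min_opt_def lex_less_iff_less min_def)
  with False assms show ?thesis by (simp add: Min_opt_def Min_Un)
qed

lemma foldl_lex_min_opt:
  assumes "finite T" "\<And>j. j \<in> set xs \<Longrightarrow> finite (S j)"
  shows "foldl (\<lambda>best j. lex_min_opt best (Min_opt (S j))) (Min_opt T) xs =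
    Min_opt (T \<union> (\<Union>j\<in>set xs. S j))"
  using assms by (induction xs arbitrary: T) (simp_all add: lex_min_opt_Min_opt Un_assoc)

lemma foldl_lex_min_opt_with_cost:
  "foldl (\<lambda>(best, c) j. let (cand, c') = g j in (lex_min_opt best cand, c + c' + 1)) (b, c0) xs =
    (foldl (\<lambda>best j. lex_min_opt best (fst (g j))) b xs, c0 + (\<Sum>j\<leftarrow>xs. snd (g j) + 1))"
  by (induction xs arbitrary: b c0) (simp_all add: split_def Let_def add.assoc)

lemma sorted_pareto_nth_less:
  assumes "sorted_pareto X" "i < j" "j < length X"
  shows "fst (X ! i) < fst (X ! j) \<and> snd (X ! j) < snd (X ! i)"
proof -
  have lex: "lex_less (X ! i) (X ! j)"
    using assms unfolding sorted_pareto_def by (simp add: sorted_wrt_iff_nth_less)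
  moreover have "X ! i \<noteq> X ! j" using lex by (auto simp: lex_less_def)
  moreover have "\<not> dominates (X ! i) (X ! j)"
    using assms unfolding sorted_pareto_def pareto_set_def by simp
  ultimately show ?thesis unfolding lex_less_def dominates_def by auto
qed

lemma sorted_pareto_nth_le:
  assumes "sorted_pareto X" "i \<le> j" "j < length X"
  shows "fst (X ! i) \<le> fst (X ! j) \<and> snd (X ! j) \<le> snd (X ! i)"
  using sorted_pareto_nth_less[OF assms(1) _ assms(3), of i] assms(2) by (cases "i = j") auto

lemma fst_mink: "fst (mink A B i j) = fst (A ! i) + fst (B ! j)"
  by (simp add: mink_def padd_def)

lemma snd_mink: "snd (mink A B i j) = snd (A ! i) + snd (B ! j)"
  by (simp add: mink_def padd_def)

lemma pareto_sum_subset: "pareto_sum A B \<subseteq> mink_entries A B"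
  by (auto simp: pareto_sum_def)

lemma pareto_sum_not_dominated:
  "q \<in> pareto_sum A B \<Longrightarrow> e \<in> mink_entries A B \<Longrightarrow> \<not> dominates e q"
  by (simp add: pareto_sum_def)

definition in_box :: "real \<Rightarrow> real \<Rightarrow> real \<Rightarrow> real \<Rightarrow> point \<Rightarrow> bool" where
  "in_box xmin xmax ymin ymax p \<longleftrightarrow> xmin \<le> fst p \<and> fst p < xmax \<and> ymin \<le> snd p \<and> snd p < ymax"

locale sorted_pareto_pair =
  fixes A B :: "point list" and n :: nat
  assumes n_pos: "1 \<le> n" and length_A: "length A = n" and length_B: "length B = n"
    and sorted_A: "sorted_pareto A" and sorted_B: "sorted_pareto B"
begin

abbreviation M where "M \<equiv> mink_entries A B"
abbreviation C where "C \<equiv> pareto_sum A B"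

abbreviation M11 where "M11 \<equiv> mink A B 0 0"
abbreviation Mnn where "Mnn \<equiv> mink A B (n - 1) (n - 1)"

lemma mem_M_iff: "e \<in> M \<longleftrightarrow> (\<exists>i<n. \<exists>j<n. e = mink A B i j)"
  unfolding mink_entries_def using length_A length_B by auto

lemma mink_in_M: "i < n \<Longrightarrow> j < n \<Longrightarrow> mink A B i j \<in> M"
  using mem_M_iff by blast

lemma finite_M: "finite M"
proof -
  have "M = (\<Union>i<n. \<Union>j<n. {mink A B i j})" using mem_M_iff by blast
  then show ?thesis by simp
qed

lemma finite_C: "finite C"
  using finite_subset[OF pareto_sum_subset finite_M] .

lemma mink_column_less:
  "i < i' \<Longrightarrow> i' < n \<Longrightarrow>
    fst (mink A B i j) < fst (mink A B i' j) \<and> snd (mink A B i' j) < snd (mink A B i j)"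
  using sorted_pareto_nth_less[OF sorted_A, of i i'] length_A by (simp add: fst_mink snd_mink)

lemma mink_column_le:
  "i \<le> i' \<Longrightarrow> i' < n \<Longrightarrow>
    fst (mink A B i j) \<le> fst (mink A B i' j) \<and> snd (mink A B i' j) \<le> snd (mink A B i j)"
  using sorted_pareto_nth_le[OF sorted_A, of i i'] length_A by (simp add: fst_mink snd_mink)

lemma mink_column_mono: "i \<le> i' \<Longrightarrow> i' < n \<Longrightarrow> mink A B i j \<le> mink A B i' j"
  using mink_column_less[of i i' j] by (cases "i = i'") (auto simp: less_eq_prod_def)

lemma M11_fst_least:
  assumes "e \<in> M"
  shows "fst M11 \<le> fst e \<and> (fst e = fst M11 \<longrightarrow> e = M11)"
proof -
  obtain i j where ij: "i < n" "j < n" "e = mink A B i j" using assms mem_M_iff by blast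
  have "fst (A ! 0) \<le> fst (A ! i)" "fst (A ! i) = fst (A ! 0) \<Longrightarrow> i = 0"
    using sorted_pareto_nth_less[OF sorted_A, of 0 i] ij length_A by (cases "i = 0"; force)+
  moreover have "fst (B ! 0) \<le> fst (B ! j)" "fst (B ! j) = fst (B ! 0) \<Longrightarrow> j = 0"
    using sorted_pareto_nth_less[OF sorted_B, of 0 j] ij length_B by (cases "j = 0"; force)+
  ultimately show ?thesis using ij by (auto simp: fst_mink snd_mink)
qed

lemma Mnn_fst_greatest_snd_least:
  assumes "e \<in> M"
  shows "fst e \<le> fst Mnn \<and> snd Mnn \<le> snd e \<and> (fst e = fst Mnn \<or> snd e = snd Mnn \<longrightarrow> e = Mnn)"
proof -
  obtain i j where ij: "i < n" "j < n" "e = mink A B i j" using assms mem_M_iff by blast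
  have "fst (A ! i) \<le> fst (A ! (n - 1))" "snd (A ! (n - 1)) \<le> snd (A ! i)"
    "fst (A ! i) = fst (A ! (n - 1)) \<or> snd (A ! i) = snd (A ! (n - 1)) \<Longrightarrow> i = n - 1"
    using sorted_pareto_nth_less[OF sorted_A, of i "n - 1"] ij length_A
    by (cases "i = n - 1"; force)+
  moreover have "fst (B ! j) \<le> fst (B ! (n - 1))" "snd (B ! (n - 1)) \<le> snd (B ! j)"
    "fst (B ! j) = fst (B ! (n - 1)) \<or> snd (B ! j) = snd (B ! (n - 1)) \<Longrightarrow> j = n - 1"
    using sorted_pareto_nth_less[OF sorted_B, of j "n - 1"] ij length_B
    by (cases "j = n - 1"; force)+
  ultimately show ?thesis using ij by (auto simp: fst_mink snd_mink)
qed

lemma M11_in_C: "M11 \<in> C"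
  using mink_in_M[of 0 0] n_pos M11_fst_least by (force simp: pareto_sum_def dominates_def)

lemma Mnn_in_C: "Mnn \<in> C"
  using mink_in_M[of "n - 1" "n - 1"] n_pos Mnn_fst_greatest_snd_least
  by (force simp: pareto_sum_def dominates_def)

lemma C_eq_if_fst_eq:
  assumes "p \<in> C" "q \<in> C" "fst p = fst q"
  shows "p = q"
proof (rule ccontr)
  assume "p \<noteq> q"
  with assms(3) have "dominates p q \<or> dominates q p" by (auto simp: dominates_def)
  with assms(1,2) pareto_sum_subset pareto_sum_not_dominated show False by blast
qed

lemma bs_first_column_fst:
  "fst (bs_first (\<lambda>i. x \<le> fst (mink A B i j)) 0 n) \<le> n \<and>
    (\<forall>i<n. x \<le> fst (mink A B i j) \<longleftrightarrow> fst (bs_first (\<lambda>i. x \<le> fst (mink A B i j)) 0 n) \<le> i)"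
proof -
  have "x \<le> fst (mink A B i' j)" if "i \<le> i'" "i' < n" "x \<le> fst (mink A B i j)" for i i'
    using mink_column_le[OF that(1,2), of j] that(3) by linarith
  then show ?thesis using bs_first_threshold[of 0 n "\<lambda>i. x \<le> fst (mink A B i j)"] by auto
qed

lemma bs_first_column_snd:
  "fst (bs_first (\<lambda>i. snd (mink A B i j) < y) 0 n) \<le> n \<and>
    (\<forall>i<n. snd (mink A B i j) < y \<longleftrightarrow> fst (bs_first (\<lambda>i. snd (mink A B i j) < y) 0 n) \<le> i)"
proof -
  have "snd (mink A B i' j) < y" if "i \<le> i'" "i' < n" "snd (mink A B i j) < y" for i i'
    using mink_column_le[OF that(1,2), of j] that(3) by linarith
  then show ?thesis using bs_first_threshold[of 0 n "\<lambda>i. snd (mink A B i j) < y"] by auto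
qed

lemma column_query_interval:
  obtains lo hi where "hi \<le> n"
    and "fst (column_query A B xmin xmax ymin ymax j) =
      (if lo < hi then Some (mink A B lo j) else None)"
    and "{mink A B i j | i. i < n \<and> in_box xmin xmax ymin ymax (mink A B i j)} =
      (\<lambda>i. mink A B i j) ` {lo..<hi}"
proof -
  define fx where "fx = fst (bs_first (\<lambda>i. xmin \<le> fst (mink A B i j)) 0 n)"
  define ex where "ex = fst (bs_first (\<lambda>i. xmax \<le> fst (mink A B i j)) 0 n)"
  define fy where "fy = fst (bs_first (\<lambda>i. snd (mink A B i j) < ymax) 0 n)"
  define ey where "ey = fst (bs_first (\<lambda>i. snd (mink A B i j) < ymin) 0 n)"
  have "fst (column_query A B xmin xmax ymin ymax j) =
      (if max fx fy < min ex ey then Some (mink A B (max fx fy) j) else None)"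
    by (simp add: column_query_def length_A Let_def split_def fx_def ex_def fy_def ey_def)
  moreover have "ex \<le> n" and ex: "\<And>i. i < n \<Longrightarrow> xmax \<le> fst (mink A B i j) \<longleftrightarrow> ex \<le> i"
    using bs_first_column_fst[of xmax j] unfolding ex_def by blast+
  moreover have fx: "\<And>i. i < n \<Longrightarrow> xmin \<le> fst (mink A B i j) \<longleftrightarrow> fx \<le> i"
    using bs_first_column_fst[of xmin j] unfolding fx_def by blast
  moreover have fy: "\<And>i. i < n \<Longrightarrow> snd (mink A B i j) < ymax \<longleftrightarrow> fy \<le> i"
    using bs_first_column_snd[of j ymax] unfolding fy_def by blast
  moreover have ey: "\<And>i. i < n \<Longrightarrow> snd (mink A B i j) < ymin \<longleftrightarrow> ey \<le> i"
    using bs_first_column_snd[of j ymin] unfolding ey_def by blast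
  moreover have "in_box xmin xmax ymin ymax (mink A B i j) \<longleftrightarrow> max fx fy \<le> i \<and> i < min ex ey"
    if "i < n" for i
  proof -
    have "in_box xmin xmax ymin ymax (mink A B i j) \<longleftrightarrow>
        xmin \<le> fst (mink A B i j) \<and> \<not> xmax \<le> fst (mink A B i j) \<and>
        \<not> snd (mink A B i j) < ymin \<and> snd (mink A B i j) < ymax"
      unfolding in_box_def by linarith
    also have "\<dots> \<longleftrightarrow> fx \<le> i \<and> \<not> ex \<le> i \<and> \<not> ey \<le> i \<and> fy \<le> i"
      using fx[OF that] ex[OF that] fy[OF that] ey[OF that] by blast
    finally show ?thesis by auto
  qed
  ultimately show ?thesis by (intro that[of "min ex ey" "max fx fy"]) force+
qed

lemma column_query_result:
  "fst (column_query A B xmin xmax ymin ymax j) =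
    Min_opt {mink A B i j | i. i < n \<and> in_box xmin xmax ymin ymax (mink A B i j)}"
proof -
  obtain lo hi where "hi \<le> n"
    and query: "fst (column_query A B xmin xmax ymin ymax j) =
      (if lo < hi then Some (mink A B lo j) else None)"
    and box: "{mink A B i j | i. i < n \<and> in_box xmin xmax ymin ymax (mink A B i j)} =
      (\<lambda>i. mink A B i j) ` {lo..<hi}"
    by (rule column_query_interval)
  show ?thesis
  proof (cases "lo < hi")
    case True
    have "Min ((\<lambda>i. mink A B i j) ` {lo..<hi}) = mink A B lo j"
    proof (rule Min_eqI)
      have "mink A B lo j \<le> mink A B i j" if "i \<in> {lo..<hi}" for i
        using that \<open>hi \<le> n\<close> by (intro mink_column_mono) auto
      then show "\<And>p. p \<in> (\<lambda>i. mink A B i j) ` {lo..<hi} \<Longrightarrow> mink A B lo j \<le> p"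
        by blast
    qed (use True in simp_all)
    with True show ?thesis unfolding query box Min_opt_def by simp
  next
    case False
    then show ?thesis unfolding query box Min_opt_def by simp
  qed
qed

lemma column_query_cost:
  "real (snd (column_query A B xmin xmax ymin ymax j)) \<le> 4 * (log 2 (real n) + 1) + 1"
proof -
  let ?c = "\<lambda>P. snd (bs_first P 0 n)"
  have "snd (column_query A B xmin xmax ymin ymax j) =
      ?c (\<lambda>i. xmin \<le> fst (mink A B i j)) + ?c (\<lambda>i. xmax \<le> fst (mink A B i j)) +
      ?c (\<lambda>i. snd (mink A B i j) < ymax) + ?c (\<lambda>i. snd (mink A B i j) < ymin) + 1"
    by (simp add: column_query_def length_A Let_def split_def)
  then show ?thesis
    using bs_first_comparisons_log[OF n_pos, of "\<lambda>i. xmin \<le> fst (mink A B i j)"]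
      bs_first_comparisons_log[OF n_pos, of "\<lambda>i. xmax \<le> fst (mink A B i j)"]
      bs_first_comparisons_log[OF n_pos, of "\<lambda>i. snd (mink A B i j) < ymax"]
      bs_first_comparisons_log[OF n_pos, of "\<lambda>i. snd (mink A B i j) < ymin"]
    by simp
qed

lemma range_min_query_result:
  "fst (range_min_query A B xmin xmax ymin ymax) = Min_opt {e \<in> M. in_box xmin xmax ymin ymax e}"
proof -
  let ?column = "\<lambda>j. {mink A B i j | i. i < n \<and> in_box xmin xmax ymin ymax (mink A B i j)}"
  have "fst (range_min_query A B xmin xmax ymin ymax) =
      foldl (\<lambda>best j. lex_min_opt best (fst (column_query A B xmin xmax ymin ymax j))) None [0..<n]"
    unfolding range_min_query_def foldl_lex_min_opt_with_cost by (simp add: length_B)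
  also have "\<dots> = foldl (\<lambda>best j. lex_min_opt best (Min_opt (?column j))) (Min_opt {}) [0..<n]"
    by (intro foldl_cong) (simp_all add: Min_opt_def column_query_result)
  also have "\<dots> = Min_opt ({} \<union> (\<Union>j\<in>set [0..<n]. ?column j))"
    by (rule foldl_lex_min_opt) auto
  also have "{} \<union> (\<Union>j\<in>set [0..<n]. ?column j) = {e \<in> M. in_box xmin xmax ymin ymax e}"
  proof (intro equalityI subsetI)
    fix e assume "e \<in> {} \<union> (\<Union>j\<in>set [0..<n]. ?column j)"
    then obtain i j where "i < n" "j < n" "e = mink A B i j" "in_box xmin xmax ymin ymax e"
      by auto
    then show "e \<in> {e \<in> M. in_box xmin xmax ymin ymax e}" using mink_in_M by simp
  next
    fix e assume e: "e \<in> {e \<in> M. in_box xmin xmax ymin ymax e}"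
    then obtain i j where "i < n" "j < n" "e = mink A B i j" using mem_M_iff by blast
    with e have "e \<in> ?column j" by blast
    with \<open>j < n\<close> show "e \<in> {} \<union> (\<Union>j\<in>set [0..<n]. ?column j)" by auto
  qed
  finally show ?thesis .
qed

lemma range_min_query_cost:
  "real (snd (range_min_query A B xmin xmax ymin ymax)) \<le> real n * (4 * (log 2 (real n) + 1) + 2)"
proof -
  have "snd (range_min_query A B xmin xmax ymin ymax) =
      (\<Sum>j\<leftarrow>[0..<n]. snd (column_query A B xmin xmax ymin ymax j) + 1)"
    unfolding range_min_query_def foldl_lex_min_opt_with_cost by (simp add: length_B)
  also have "\<dots> = (\<Sum>j<n. snd (column_query A B xmin xmax ymin ymax j) + 1)"
    by (simp add: interv_sum_list_conv_sum_set_nat atLeast0LessThan)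
  finally have "real (snd (range_min_query A B xmin xmax ymin ymax)) =
      (\<Sum>j<n. real (snd (column_query A B xmin xmax ymin ymax j)) + 1)"
    by (simp add: add.commute)
  also have "\<dots> \<le> (\<Sum>j<n. 4 * (log 2 (real n) + 1) + 2)"
  proof (rule sum_mono)
    fix j
    show "real (snd (column_query A B xmin xmax ymin ymax j)) + 1 \<le> 4 * (log 2 (real n) + 1) + 2"
      using column_query_cost[of xmin xmax ymin ymax j] by linarith
  qed
  finally show ?thesis by simp
qed

lemma next_pareto_point_in_box:
  assumes "(x, y) \<in> C" "q \<in> C" "x < fst q" "fst q < fst Mnn"
  shows "in_box x (fst Mnn) (snd Mnn) y q"
proof -
  have "q \<in> M" using assms(2) pareto_sum_subset by blast
  have "snd q < y"
  proof (rule ccontr)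
    assume "\<not> snd q < y"
    with assms(3) have "dominates (x, y) q" by (auto simp: dominates_def)
    with assms(1,2) show False using pareto_sum_not_dominated pareto_sum_subset by blast
  qed
  with assms(3,4) Mnn_fst_greatest_snd_least[OF \<open>q \<in> M\<close>] show ?thesis
    by (auto simp: in_box_def)
qed

lemma box_lex_min_in_C:
  assumes "(x, y) \<in> C" and "m \<in> M" "in_box x (fst Mnn) (snd Mnn) y m"
    and least: "\<And>e. e \<in> M \<Longrightarrow> in_box x (fst Mnn) (snd Mnn) y e \<Longrightarrow> m \<le> e"
  shows "m \<in> C \<and> x < fst m"
proof -
  from assms(3) have m: "x \<le> fst m" "fst m < fst Mnn" "snd m < y" by (auto simp: in_box_def)
  have "\<not> dominates e m" if "e \<in> M" for e
  proof
    assume dom: "dominates e m"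
    have "x \<le> fst e"
    proof (rule ccontr)
      assume "\<not> x \<le> fst e"
      with dom m(3) have "dominates e (x, y)" by (auto simp: dominates_def)
      with assms(1) \<open>e \<in> M\<close> show False using pareto_sum_not_dominated by blast
    qed
    with dom m Mnn_fst_greatest_snd_least[OF \<open>e \<in> M\<close>] have "in_box x (fst Mnn) (snd Mnn) y e"
      by (auto simp: in_box_def dominates_def)
    with least \<open>e \<in> M\<close> have "m \<le> e" by blast
    with dom show False by (auto simp: dominates_def less_eq_prod_def prod_eq_iff)
  qed
  with assms(2) have "m \<in> C" by (simp add: pareto_sum_def)
  moreover have "x < fst m"
  proof (rule ccontr)
    assume "\<not> x < fst m"
    with m(1,3) have "dominates m (x, y)" by (cases m) (auto simp: dominates_def)
    with assms(1,2) show False using pareto_sum_not_dominated by blast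
  qed
  ultimately show ?thesis ..
qed

lemma next_pareto_point:
  assumes "(x, y) \<in> C"
  shows "Min_opt {e \<in> M. in_box x (fst Mnn) (snd Mnn) y e} =
    Min_opt {q \<in> C. x < fst q \<and> fst q < fst Mnn}"
proof -
  define S where "S = {e \<in> M. in_box x (fst Mnn) (snd Mnn) y e}"
  define Q where "Q = {q \<in> C. x < fst q \<and> fst q < fst Mnn}"
  have "finite S" unfolding S_def using finite_M by simp
  have Q_sub_S: "Q \<subseteq> S"
    unfolding S_def Q_def using next_pareto_point_in_box[OF assms] pareto_sum_subset[of A B] by blast
  have Min_S_in_Q: "Min S \<in> Q" if "S \<noteq> {}"
  proof -
    define m where "m = Min S"
    have "m \<in> S" using Min_in[OF \<open>finite S\<close> that] by (simp add: m_def)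
    moreover have "m \<le> e" if "e \<in> S" for e
      using Min_le[OF \<open>finite S\<close> that] by (simp add: m_def)
    ultimately have "m \<in> C \<and> x < fst m"
      using box_lex_min_in_C[OF assms, of m] unfolding S_def by blast
    with \<open>m \<in> S\<close> have "m \<in> Q" unfolding S_def Q_def in_box_def by blast
    then show ?thesis by (simp add: m_def)
  qed
  have "Min_opt S = Min_opt Q"
  proof (cases "S = {}")
    case True
    with Q_sub_S show ?thesis by (simp add: Min_opt_def)
  next
    case False
    then have "Q \<noteq> {}" using Min_S_in_Q by blast
    have "Min Q \<le> Min S"
      using Min_le[OF finite_subset[OF Q_sub_S \<open>finite S\<close>] Min_S_in_Q[OF False]] .
    moreover have "Min S \<le> Min Q" using Min_antimono[OF Q_sub_S \<open>Q \<noteq> {}\<close> \<open>finite S\<close>] .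
    ultimately show ?thesis using False \<open>Q \<noteq> {}\<close> by (simp add: Min_opt_def)
  qed
  then show ?thesis unfolding S_def Q_def .
qed

lemma C_eq_if_no_next:
  assumes "{q \<in> C. x < fst q \<and> fst q < fst Mnn} = {}"
  shows "C = insert Mnn {q \<in> C. fst q \<le> x}"
proof -
  have "q = Mnn" if "q \<in> C" "x < fst q" for q
  proof -
    have "q \<in> M" using that(1) pareto_sum_subset by blast
    then have "fst q \<le> fst Mnn" "fst q = fst Mnn \<Longrightarrow> q = Mnn"
      using Mnn_fst_greatest_snd_least by auto
    moreover have "\<not> fst q < fst Mnn" using that assms by blast
    ultimately show ?thesis by linarith
  qed
  then show ?thesis using Mnn_in_C by force
qed

lemma C_upto_next:
  fixes x :: real
  defines "Q \<equiv> {q \<in> C. x < fst q \<and> fst q < fst Mnn}"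
  assumes "Q \<noteq> {}"
  shows "Min Q \<in> C" "x < fst (Min Q)"
    "{q \<in> C. fst q \<le> fst (Min Q)} = insert (Min Q) {q \<in> C. fst q \<le> x}"
proof -
  have "finite Q" using finite_C by (simp add: Q_def)
  then have "Min Q \<in> Q" and least: "\<And>q. q \<in> Q \<Longrightarrow> Min Q \<le> q"
    using Min_in[OF _ assms(2)] Min_le by blast+
  then show "Min Q \<in> C" "x < fst (Min Q)" by (simp_all add: Q_def)
  have "fst q \<le> x" if "q \<in> C" "fst q \<le> fst (Min Q)" "q \<noteq> Min Q" for q
  proof (rule ccontr)
    assume "\<not> fst q \<le> x"
    with that(1,2) \<open>Min Q \<in> Q\<close> have "q \<in> Q" by (auto simp: Q_def)
    then have "fst (Min Q) \<le> fst q" using least[of q] by (auto simp: less_eq_prod_def)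
    with that(2) have "q = Min Q" using C_eq_if_fst_eq[OF that(1) \<open>Min Q \<in> C\<close>] by simp
    with that(3) show False ..
  qed
  with \<open>Min Q \<in> C\<close> \<open>x < fst (Min Q)\<close>
  show "{q \<in> C. fst q \<le> fst (Min Q)} = insert (Min Q) {q \<in> C. fst q \<le> x}"
    by force
qed

text \<open>n columns, each costing four binary searches plus a constant, and one unit for the
  step itself.\<close>
definition step_cost :: real where
  "step_cost = real n * (4 * (log 2 (real n) + 1) + 2) + 1"

lemma step_cost_nonneg: "0 \<le> step_cost"
  using n_pos by (simp add: step_cost_def)

text \<open>The last conjunct bounds the number of running iterations by card C.\<close>
definition sbs_invariant :: "nat \<Rightarrow> sbs_state \<Rightarrow> bool" where
  "sbs_invariant t s \<longleftrightarrow>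
    real (time s) \<le> 1 + real t * step_cost \<and> length (out s) \<le> card C + 1 \<and>
    (if halted s then set (out s) = C
     else (cur_xmin s, cur_ymax s) \<in> C \<and>
       set (out s) = insert Mnn {q \<in> C. fst q \<le> cur_xmin s} \<and>
       length (out s) = t + 2 \<and> card {q \<in> C. fst q \<le> cur_xmin s} = t + 1)"

lemma sbs_invariant_init: "sbs_invariant 0 (sbs_init A B)"
proof -
  have "{q \<in> C. fst q \<le> fst M11} = {M11}"
    using M11_in_C M11_fst_least pareto_sum_subset by force
  moreover have "card C \<noteq> 0" using M11_in_C finite_C by auto
  moreover have "out (sbs_init A B) = [M11, Mnn]" "cur_xmin (sbs_init A B) = fst M11"
    "cur_ymax (sbs_init A B) = snd M11" "\<not> halted (sbs_init A B)" "time (sbs_init A B) = 1"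
    by (simp_all add: sbs_init_def Let_def length_A length_B)
  ultimately show ?thesis using M11_in_C by (simp add: sbs_invariant_def insert_commute)
qed

lemma sbs_step_running:
  assumes "\<not> halted s" and "(cur_xmin s, cur_ymax s) \<in> C"
  defines "Q \<equiv> {q \<in> C. cur_xmin s < fst q \<and> fst q < fst Mnn}"
  obtains c where "real c \<le> step_cost"
    and "sbs_step A B s =
      (if Q = {} then s\<lparr>halted := True, time := time s + c\<rparr>
       else s\<lparr>out := out s @ [Min Q], cur_xmin := fst (Min Q), cur_ymax := snd (Min Q),
         time := time s + c\<rparr>)"
proof -
  define rq where "rq = range_min_query A B (cur_xmin s) (fst Mnn) (snd Mnn) (cur_ymax s)"
  have "fst rq = Min_opt Q"
    unfolding rq_def Q_def range_min_query_result next_pareto_point[OF assms(2)] ..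
  moreover have "sbs_step A B s = (case fst rq of
      None \<Rightarrow> s\<lparr>halted := True, time := time s + snd rq + 1\<rparr>
    | Some m \<Rightarrow> s\<lparr>out := out s @ [m], cur_xmin := fst m, cur_ymax := snd m,
        time := time s + snd rq + 1\<rparr>)"
    using assms(1) unfolding sbs_step_def rq_def length_A length_B Let_def split_def
    by (simp only: if_False simp_thms)
  ultimately have "sbs_step A B s =
      (if Q = {} then s\<lparr>halted := True, time := time s + (snd rq + 1)\<rparr>
       else s\<lparr>out := out s @ [Min Q], cur_xmin := fst (Min Q), cur_ymax := snd (Min Q),
         time := time s + (snd rq + 1)\<rparr>)"
    by (simp add: Min_opt_def add.assoc)
  moreover have "real (snd rq + 1) \<le> step_cost"
    using range_min_query_cost[of "cur_xmin s" "fst Mnn" "snd Mnn" "cur_ymax s"]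
    unfolding rq_def step_cost_def by simp
  ultimately show ?thesis using that by blast
qed

lemma sbs_invariant_step:
  assumes inv: "sbs_invariant t s"
  shows "sbs_invariant (Suc t) (sbs_step A B s)"
proof (cases "halted s")
  case True
  have "real t * step_cost \<le> real (Suc t) * step_cost"
    using step_cost_nonneg by (simp add: mult_right_mono)
  with inv True show ?thesis by (simp add: sbs_step_def sbs_invariant_def)
next
  case running: False
  let ?x = "cur_xmin s"
  let ?Q = "{q \<in> C. ?x < fst q \<and> fst q < fst Mnn}"
  from inv running have xy: "(?x, cur_ymax s) \<in> C"
    and out_s: "set (out s) = insert Mnn {q \<in> C. fst q \<le> ?x}"
    and length_s: "length (out s) = t + 2" and card_s: "card {q \<in> C. fst q \<le> ?x} = t + 1"
    and time_s: "real (time s) \<le> 1 + real t * step_cost"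
    by (simp_all add: sbs_invariant_def)
  obtain c where c: "real c \<le> step_cost" and step: "sbs_step A B s =
      (if ?Q = {} then s\<lparr>halted := True, time := time s + c\<rparr>
       else s\<lparr>out := out s @ [Min ?Q], cur_xmin := fst (Min ?Q), cur_ymax := snd (Min ?Q),
         time := time s + c\<rparr>)"
    by (rule sbs_step_running[OF running xy])
  have time': "real (time s + c) \<le> 1 + real (Suc t) * step_cost"
    using time_s c by (simp add: algebra_simps)
  have card_le: "card {q \<in> C. fst q \<le> x'} \<le> card C" for x'
    by (rule card_mono[OF finite_C]) auto
  show ?thesis
  proof (cases "?Q = {}")
    case True
    then have "set (out s) = C" using out_s C_eq_if_no_next by simp
    with step[unfolded if_P[OF True]] time' length_s card_s card_le[of ?x] show ?thesis
      by (simp add: sbs_invariant_def)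
  next
    case False
    note next_point = C_upto_next[OF False]
    then have "card {q \<in> C. fst q \<le> fst (Min ?Q)} = t + 2"
      using card_s finite_C by simp
    moreover have "set (out s @ [Min ?Q]) = insert Mnn {q \<in> C. fst q \<le> fst (Min ?Q)}"
      using out_s next_point(3) by auto
    ultimately show ?thesis
      using step[unfolded if_not_P[OF False]] time' length_s card_le[of "fst (Min ?Q)"]
        running next_point(1)
      by (simp add: sbs_invariant_def)
  qed
qed

lemma sbs_invariant_run: "sbs_invariant t (sbs_run A B t)"
  by (induction t) (simp_all add: sbs_run_def sbs_invariant_init sbs_invariant_step)

lemma sbs_invariant_halted: "sbs_invariant t s \<Longrightarrow> card C \<le> t \<Longrightarrow> halted s"
  using card_mono[OF finite_C, of "{q \<in> C. fst q \<le> cur_xmin s}"]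
  by (auto simp: sbs_invariant_def split: if_splits)

lemma sbs_run_result:
  "halted (sbs_run A B (card C)) \<and> set (out (sbs_run A B (card C))) = C \<and>
    real (time (sbs_run A B (card C))) \<le> 1 + real (card C) * step_cost"
  using sbs_invariant_run[of "card C"] sbs_invariant_halted[OF sbs_invariant_run]
  by (simp add: sbs_invariant_def)

lemma sbs_time_bound:
  "real (time (sbs_run A B (card C))) \<le> 20 * (real n * real (card C) * (log 2 (real n) + 1))"
proof -
  define k L where "k = real (card C)" and "L = log 2 (real n) + 1"
  have "1 \<le> real n" "1 \<le> L" using n_pos by (simp_all add: L_def)
  moreover have "1 \<le> k" using M11_in_C finite_C by (auto simp: k_def Suc_le_eq card_gt_0_iff)
  ultimately have "1 \<le> n * k" "n * k \<le> n * k * L" "k \<le> n * k"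
    using mult_mono[of 1 "real n" 1 k] mult_left_mono[of 1 L "n * k"]
      mult_right_mono[of 1 "real n" k] by simp_all
  moreover have "k * step_cost = 4 * (n * k * L) + 2 * (n * k) + k"
    unfolding step_cost_def L_def by (simp add: algebra_simps)
  ultimately have "1 + k * step_cost \<le> 20 * (n * k * L)" by linarith
  with sbs_run_result show ?thesis unfolding k_def L_def by linarith
qed

lemma sbs_space_bound: "real (sbs_space A B (sbs_run A B t)) \<le> 20 * (real n + real (card C))"
proof -
  have "length (out (sbs_run A B t)) \<le> card C + 1"
    using sbs_invariant_run[of t] by (simp add: sbs_invariant_def)
  then have "sbs_space A B (sbs_run A B t) \<le> 2 * n + card C + 17"
    unfolding sbs_space_def length_A length_B by simp
  then have "real (sbs_space A B (sbs_run A B t)) \<le> 2 * real n + real (card C) + 17"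
    by linarith
  moreover have "1 \<le> real n" using n_pos by simp
  moreover have "0 \<le> real (card C)" by simp
  ultimately show ?thesis unfolding distrib_left by linarith
qed

end

theorem mainTheorem7:
  shows "\<exists>c::real. c > 0 \<and>
    (\<forall>(A::point list) (B::point list) (n::nat).
       n \<ge> 1 \<and> length A = n \<and> length B = n \<and> sorted_pareto A \<and> sorted_pareto B \<longrightarrow>
       (let k = card (pareto_sum A B) in
        \<exists>t. halted (sbs_run A B t) \<and>
            set (out (sbs_run A B t)) = pareto_sum A B \<and>
            real (time (sbs_run A B t)) \<le> c * (real n * real k * (log 2 (real n) + 1)) \<and>
            (\<forall>s\<le>t. real (sbs_space A B (sbs_run A B s)) \<le> c * (real n + real k))))"
proof (intro exI[of _ 20] conjI allI impI)
  fix A B :: "point list" and n :: nat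
  assume "n \<ge> 1 \<and> length A = n \<and> length B = n \<and> sorted_pareto A \<and> sorted_pareto B"
  then interpret sorted_pareto_pair A B n by unfold_locales auto
  show "let k = card (pareto_sum A B) in
    \<exists>t. halted (sbs_run A B t) \<and> set (out (sbs_run A B t)) = pareto_sum A B \<and>
      real (time (sbs_run A B t)) \<le> 20 * (real n * real k * (log 2 (real n) + 1)) \<and>
      (\<forall>s\<le>t. real (sbs_space A B (sbs_run A B s)) \<le> 20 * (real n + real k))"
    unfolding Let_def using sbs_run_result sbs_time_bound sbs_space_bound by blast
qed simp

end
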